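(* For integers $\ell,k$ with $1\le\ell\le 3$ and $k\ge\ell$, $\overline{\alpha}(\{1,2k,2k+2\ell\})=\frac{2k}{4k+2\ell}$.
   Context: For a finite set $S$ of positive integers, the distance graph $G(S)$ has vertex set $\mathbb{Z}$, with $i,j$ adjacent iff $|i-j|\in S$. The density of $A\subseteq\mathbb{Z}$ is $\delta(A)=\limsup_{N\to\infty}\frac{|A\cap[-N,N]|}{2N+1}$, and the independence ratio $\overline{\alpha}(S)$ is the supremum of $\delta(A)$ over independent sets $A$ of $G(S)$. *)

theory Defs
  imports "HOL-Analysis.Analysis"
begin

text \<open>Independent sets of the distance graph G(S) on the integers:
  i, j adjacent iff |i - j| \<in> S.\<close>
definition dist_indep :: "int set \<Rightarrow> int set \<Rightarrow> bool" where
  "dist_indep S A \<longleftrightarrow> (\<forall>i\<in>A. \<forall>j\<in>A. \<bar>i - j\<bar> \<notin> S)"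

definition upper_density :: "int set \<Rightarrow> ereal" where
  "upper_density A = limsup (\<lambda>N::nat. ereal (real (card (A \<inter> {- int N .. int N})) / (2 * real N + 1)))"

definition indep_ratio :: "int set \<Rightarrow> ereal" where
  "indep_ratio S = (SUP A \<in> {A. dist_indep S A}. upper_density A)"

end

theory Submission
  imports Defs "HOL-Real_Asymp.Real_Asymp"
begin

text \<open>Upper bound: suppose a window of \<open>4k + 2l\<close> consecutive integers contained \<open>2k + 1\<close>
  points \<open>p 0 < \<dots> < p (2k)\<close> of an independent set. Since the distance 1 is forbidden,
  consecutive points are at least 2 apart, so the excess \<open>Q i = p i - p 0 - 2i\<close> is
  nondecreasing with \<open>Q 0 = 0\<close> and \<open>Q (2k) < 2l \<le> 6\<close>, while
  \<open>p j - p i = 2(j - i) + Q j - Q i\<close> must avoid \<open>2k\<close> and \<open>2k + 2l\<close>. Such a profile is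
  determined by the at most five places where it increases, and for \<open>l \<le> 3\<close> a finite case
  analysis on these places shows that no admissible profile exists. So every window holds at most
  \<open>2k\<close> points, and the upper density is at most \<open>2k / (4k + 2l)\<close>.

  Lower bound: the integers whose residue modulo \<open>4k + 2l\<close> is one of
  \<open>0, 2, \<dots>, 2k - 2, 2k + 1, 2k + 3, \<dots>, 4k - 1\<close> form an independent set with exactly \<open>2k\<close>
  points in every window of length \<open>4k + 2l\<close>.\<close>

lemma limsup_le_of_vanishing_excess:
  fixes f g :: "nat \<Rightarrow> real"
  assumes "\<And>N. f N \<le> c + g N" and "g \<longlonglongrightarrow> 0"
  shows "limsup (\<lambda>N. ereal (f N)) \<le> ereal c"
proof -
  have "limsup (\<lambda>N. ereal (f N)) \<le> limsup (\<lambda>N. ereal (c + g N))"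
    by (rule Limsup_mono) (simp add: assms(1))
  also have "\<dots> = ereal c"
    using tendsto_add[OF tendsto_const[of c] assms(2)]
    by (intro lim_imp_Limsup) (simp_all add: lim_ereal)
  finally show ?thesis .
qed

lemma limsup_ge_of_vanishing_deficit:
  fixes f g :: "nat \<Rightarrow> real"
  assumes "\<And>N. c - g N \<le> f N" and "g \<longlonglongrightarrow> 0"
  shows "ereal c \<le> limsup (\<lambda>N. ereal (f N))"
proof -
  have "ereal c = limsup (\<lambda>N. ereal (c - g N))"
    using tendsto_diff[OF tendsto_const[of c] assms(2)]
    by (intro lim_imp_Limsup[symmetric]) (simp_all add: lim_ereal)
  also have "\<dots> \<le> limsup (\<lambda>N. ereal (f N))"
    by (rule Limsup_mono) (simp add: assms(1))
  finally show ?thesis .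
qed

lemma card_Int_consecutive_windows:
  fixes A :: "int set" and a M :: int
  assumes "0 \<le> M"
  shows "card (A \<inter> {a..<a + int m * M}) = (\<Sum>j<m. card (A \<inter> {a + int j * M..<a + int j * M + M}))"
proof (induction m)
  case 0
  then show ?case by simp
next
  case (Suc m)
  have "A \<inter> {a..<a + int (Suc m) * M} =
      A \<inter> {a..<a + int m * M} \<union> A \<inter> {a + int m * M..<a + int m * M + M}"
    using assms by (auto simp: algebra_simps) (smt (verit) mult_nonneg_nonneg of_nat_0_le_iff)
  moreover have "A \<inter> {a..<a + int m * M} \<inter> (A \<inter> {a + int m * M..<a + int m * M + M}) = {}"
    by auto
  ultimately show ?case using Suc by (simp add: card_Un_disjoint)
qed

lemma card_Int_consecutive_windows_le:
  fixes A :: "int set" and a B M :: int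
  assumes "\<And>x. int (card (A \<inter> {x..<x + M})) \<le> B" and "0 \<le> M"
  shows "int (card (A \<inter> {a..<a + int m * M})) \<le> B * int m"
proof -
  have "int (card (A \<inter> {a..<a + int m * M})) =
      (\<Sum>j<m. int (card (A \<inter> {a + int j * M..<a + int j * M + M})))"
    by (simp add: card_Int_consecutive_windows[OF \<open>0 \<le> M\<close>])
  also have "\<dots> \<le> (\<Sum>j<m. B)" by (intro sum_mono assms(1))
  finally show ?thesis by (simp add: mult.commute)
qed

lemma card_Int_consecutive_windows_ge:
  fixes A :: "int set" and a B M :: int
  assumes "\<And>x. B \<le> int (card (A \<inter> {x..<x + M}))" and "0 \<le> M"
  shows "B * int m \<le> int (card (A \<inter> {a..<a + int m * M}))"
proof -
  have "B * int m = (\<Sum>j<m. B)" by simp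
  also have "\<dots> \<le> (\<Sum>j<m. int (card (A \<inter> {a + int j * M..<a + int j * M + M})))"
    by (intro sum_mono assms(1))
  also have "\<dots> = int (card (A \<inter> {a..<a + int m * M}))"
    by (simp add: card_Int_consecutive_windows[OF \<open>0 \<le> M\<close>])
  finally show ?thesis .
qed

lemma upper_density_le_of_windows:
  fixes A :: "int set" and B M :: int
  assumes window: "\<And>x. int (card (A \<inter> {x..<x + M})) \<le> B" and "0 < M"
  shows "upper_density A \<le> ereal (B / M)"
  unfolding upper_density_def
proof (rule limsup_le_of_vanishing_excess)
  show "(\<lambda>N. B / (2 * real N + 1)) \<longlonglongrightarrow> 0" by real_asymp
next
  fix N :: nat
  define m where "m = nat ((2 * int N + 1) div M) + 1"
  have m: "real_of_int (int m) = real_of_int ((2 * int N + 1) div M) + 1"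
    using \<open>0 < M\<close> by (simp add: m_def pos_imp_zdiv_nonneg_iff)
  have "int m * M = (2 * int N + 1) div M * M + M"
    using \<open>0 < M\<close> by (simp add: m_def pos_imp_zdiv_nonneg_iff distrib_right)
  moreover have "(2 * int N + 1) mod M < M" using \<open>0 < M\<close> by simp
  ultimately have "2 * int N + 1 < int m * M"
    using div_mult_mod_eq[of "2 * int N + 1" M] by linarith
  then have "card (A \<inter> {- int N..int N}) \<le> card (A \<inter> {- int N..<- int N + int m * M})"
    by (intro card_mono) auto
  then have "int (card (A \<inter> {- int N..int N})) \<le> B * int m"
    using card_Int_consecutive_windows_le[OF window, where a = "- int N" and m = m] \<open>0 < M\<close> by simp
  then have "real_of_int (int (card (A \<inter> {- int N..int N}))) \<le> real_of_int (B * int m)"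
    by (simp only: of_int_le_iff)
  then have "real (card (A \<inter> {- int N..int N})) \<le> B * (real_of_int ((2 * int N + 1) div M) + 1)"
    using m by simp
  also have "\<dots> \<le> B * ((2 * real N + 1) / M + 1)"
    using window[of 0] real_of_int_div4[of "2 * int N + 1" M]
    by (intro mult_left_mono) (auto intro: order_trans[OF of_nat_0_le_iff])
  finally have "real (card (A \<inter> {- int N..int N})) / (2 * real N + 1) \<le>
      B * ((2 * real N + 1) / M + 1) / (2 * real N + 1)"
    by (intro divide_right_mono) simp_all
  also have "\<dots> = B / M + B / (2 * real N + 1)"
    using \<open>0 < M\<close> by (simp add: field_simps)
  finally show "real (card (A \<inter> {- int N..int N})) / (2 * real N + 1) \<le> B / M + B / (2 * real N + 1)" .
qed

lemma upper_density_ge_of_windows: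
  fixes A :: "int set" and B M :: int
  assumes window: "\<And>x. B \<le> int (card (A \<inter> {x..<x + M}))" and "0 < M" and "0 \<le> B"
  shows "ereal (B / M) \<le> upper_density A"
  unfolding upper_density_def
proof (rule limsup_ge_of_vanishing_deficit)
  show "(\<lambda>N. B / (2 * real N + 1)) \<longlonglongrightarrow> 0" by real_asymp
next
  fix N :: nat
  define m where "m = nat ((2 * int N + 1) div M)"
  have m: "real_of_int (int m) = real_of_int ((2 * int N + 1) div M)"
    using \<open>0 < M\<close> by (simp add: m_def pos_imp_zdiv_nonneg_iff)
  have "int m * M = (2 * int N + 1) div M * M"
    using \<open>0 < M\<close> by (simp add: m_def pos_imp_zdiv_nonneg_iff)
  moreover have "0 \<le> (2 * int N + 1) mod M" using \<open>0 < M\<close> by simp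
  ultimately have "int m * M \<le> 2 * int N + 1"
    using div_mult_mod_eq[of "2 * int N + 1" M] by linarith
  then have "A \<inter> {- int N..<- int N + int m * M} \<subseteq> A \<inter> {- int N..int N}" by auto
  then have "card (A \<inter> {- int N..<- int N + int m * M}) \<le> card (A \<inter> {- int N..int N})"
    by (intro card_mono) auto
  then have "B * int m \<le> int (card (A \<inter> {- int N..int N}))"
    using card_Int_consecutive_windows_ge[OF window, where a = "- int N" and m = m] \<open>0 < M\<close> by simp
  then have "real_of_int (B * int m) \<le> real_of_int (int (card (A \<inter> {- int N..int N})))"
    by (simp only: of_int_le_iff)
  then have "B * real m \<le> real (card (A \<inter> {- int N..int N}))" by simp
  moreover have "(2 * real N + 1) / M - 1 \<le> real m"
    using m real_of_int_div3[of "2 * int N + 1" M] by simp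
  ultimately have "B * ((2 * real N + 1) / M - 1) \<le> real (card (A \<inter> {- int N..int N}))"
    using \<open>0 \<le> B\<close> by (smt (verit) mult_left_mono of_int_0_le_iff)
  then have "B * ((2 * real N + 1) / M - 1) / (2 * real N + 1) \<le>
      real (card (A \<inter> {- int N..int N})) / (2 * real N + 1)"
    by (intro divide_right_mono) simp_all
  moreover have "B * ((2 * real N + 1) / M - 1) / (2 * real N + 1) = B / M - B / (2 * real N + 1)"
    using \<open>0 < M\<close> by (simp add: field_simps)
  ultimately show "B / M - B / (2 * real N + 1) \<le> real (card (A \<inter> {- int N..int N})) / (2 * real N + 1)"
    by simp
qed

lemma card_periodic_Int_window:
  fixes R :: "int set" and M a :: int
  assumes "R \<subseteq> {0..<M}"
  shows "card ({x. x mod M \<in> R} \<inter> {a..<a + M}) = card R"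
proof -
  have "bij_betw (\<lambda>r. a + (r - a) mod M) R ({x. x mod M \<in> R} \<inter> {a..<a + M})"
  proof (rule bij_betw_byWitness[where f' = "\<lambda>x. x mod M"])
    show "\<forall>r\<in>R. (a + (r - a) mod M) mod M = r"
      using assms by (auto simp: mod_add_right_eq)
    show "\<forall>x\<in>{x. x mod M \<in> R} \<inter> {a..<a + M}. a + (x mod M - a) mod M = x"
      by (auto simp: mod_diff_left_eq)
    show "(\<lambda>r. a + (r - a) mod M) ` R \<subseteq> {x. x mod M \<in> R} \<inter> {a..<a + M}"
      using assms by (auto simp: mod_add_right_eq)
    show "(\<lambda>x. x mod M) ` ({x. x mod M \<in> R} \<inter> {a..<a + M}) \<subseteq> R" by auto
  qed
  then show ?thesis by (simp add: bij_betw_same_card)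
qed

lemma dist_indep_periodic:
  fixes R S :: "int set" and M :: int
  assumes "S \<subseteq> {0<..<M}"
    and differences: "\<And>u w. u \<in> R \<Longrightarrow> w \<in> R \<Longrightarrow> u - w \<notin> S \<and> u - w + M \<notin> S"
  shows "dist_indep S {x. x mod M \<in> R}"
  unfolding dist_indep_def
proof (intro ballI notI)
  have no_positive_difference: False
    if "x mod M \<in> R" "y mod M \<in> R" "x - y \<in> S" for x y
  proof -
    have "0 < x - y" "x - y < M" using that(3) assms(1) by auto
    define d where "d = x mod M - y mod M"
    have d_mod: "d mod M = x - y"
      using \<open>0 < x - y\<close> \<open>x - y < M\<close> by (simp add: d_def mod_diff_eq)
    have "0 < M" using \<open>0 < x - y\<close> \<open>x - y < M\<close> by simp
    then have d_bounds: "- M < d" "d < M"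
      using pos_mod_sign[of M x] pos_mod_bound[of M x] pos_mod_sign[of M y] pos_mod_bound[of M y]
      unfolding d_def by linarith+
    have "d = x - y \<or> d + M = x - y"
    proof (cases "0 \<le> d")
      case True
      then show ?thesis using d_mod d_bounds by (simp add: mod_pos_pos_trivial)
    next
      case False
      then have "(d + M) mod M = d + M" using d_bounds by (intro mod_pos_pos_trivial) auto
      then show ?thesis using d_mod by simp
    qed
    then show False using differences[OF that(1,2)] that(3) unfolding d_def by auto
  qed
  fix x y assume "x \<in> {x. x mod M \<in> R}" "y \<in> {x. x mod M \<in> R}" "\<bar>x - y\<bar> \<in> S"
  then show False
    using no_positive_difference[of x y] no_positive_difference[of y x] by (cases "y \<le> x") auto
qed

definition extremal_residues :: "int \<Rightarrow> int set" where
  "extremal_residues k = (\<lambda>a. 2 * a) ` {0..<k} \<union> (\<lambda>a. 2 * k + 1 + 2 * a) ` {0..<k}"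

lemma card_extremal_residues:
  assumes "0 \<le> k"
  shows "int (card (extremal_residues k)) = 2 * k"
proof -
  have "card (extremal_residues k) =
      card ((\<lambda>a. 2 * a) ` {0..<k}) + card ((\<lambda>a. 2 * k + 1 + 2 * a) ` {0..<k})"
    unfolding extremal_residues_def by (rule card_Un_disjoint) auto
  also have "\<dots> = 2 * nat k" by (simp add: card_image inj_on_def)
  finally show ?thesis using assms by simp
qed

lemma extremal_residues_differences:
  fixes k l u w :: int
  assumes "1 \<le> l" "l \<le> k" "u \<in> extremal_residues k" "w \<in> extremal_residues k"
  shows "u - w \<notin> {1, 2 * k, 2 * k + 2 * l} \<and> u - w + (4 * k + 2 * l) \<notin> {1, 2 * k, 2 * k + 2 * l}"
  using assms unfolding extremal_residues_def by auto presburger+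

lemma dist_indep_extremal:
  fixes k l :: int
  assumes "1 \<le> l" "l \<le> k"
  shows "dist_indep {1, 2 * k, 2 * k + 2 * l} {x. x mod (4 * k + 2 * l) \<in> extremal_residues k}"
  using assms extremal_residues_differences[OF assms] by (intro dist_indep_periodic) auto

lemma obtain_increasing_elements:
  fixes F :: "'a::linorder set"
  assumes "finite F" and "n < card F"
  obtains p :: "nat \<Rightarrow> 'a"
  where "\<And>i j. i < j \<Longrightarrow> j \<le> n \<Longrightarrow> p i < p j" and "\<And>i. i \<le> n \<Longrightarrow> p i \<in> F"
proof
  define xs where "xs = sorted_list_of_set F"
  have xs: "sorted_wrt (<) xs" "set xs = F" "length xs = card F"
    using assms(1) by (simp_all add: xs_def)
  show "xs ! i < xs ! j" if "i < j" "j \<le> n" for i j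
    using sorted_wrt_nth_less[OF xs(1) that(1)] that assms(2) xs(3) by simp
  show "xs ! i \<in> F" if "i \<le> n" for i
    using that assms(2) xs(2,3) by (metis le_less_trans nth_mem)
qed

lemma spread_ge_of_increments_ge:
  fixes p :: "nat \<Rightarrow> int" and c :: int
  assumes "\<And>i. i < n \<Longrightarrow> p i + c \<le> p (Suc i)" and "i \<le> j" and "j \<le> n"
  shows "p i + c * int (j - i) \<le> p j"
  using assms(2,3)
proof (induction j rule: dec_induct)
  case base
  then show ?case by simp
next
  case (step j)
  then show ?case using assms(1)[of j] by (simp add: Suc_diff_le algebra_simps)
qed

definition jump_count :: "int list \<Rightarrow> int \<Rightarrow> int \<Rightarrow> int" where
  "jump_count ts i j = int (length (filter (\<lambda>t. i < t \<and> t \<le> j) ts))"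

lemma jump_count_Nil: "jump_count [] i j = 0"
  by (simp add: jump_count_def)

lemma jump_count_Cons:
  "jump_count (t # ts) i j = (if i < t \<and> t \<le> j then 1 else 0) + jump_count ts i j"
  by (simp add: jump_count_def)

text \<open>The positions where a nondecreasing integer function climbs from level \<open>v - 1\<close> to \<open>v\<close>
  encode its increments; the position \<open>K + 1\<close> stands for a level that is never reached.\<close>

definition first_reach :: "(int \<Rightarrow> int) \<Rightarrow> int \<Rightarrow> int \<Rightarrow> int" where
  "first_reach Q K v = (if v \<le> Q K then int (LEAST n. v \<le> Q (int n)) else K + 1)"

lemma first_reach_le_iff:
  fixes Q :: "int \<Rightarrow> int"
  assumes mono: "mono_on {0..K} Q" and "0 \<le> j" and "j \<le> K"
  shows "first_reach Q K v \<le> j \<longleftrightarrow> v \<le> Q j"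
proof (cases "v \<le> Q K")
  case True
  define m where "m = (LEAST n. v \<le> Q (int n))"
  have "v \<le> Q (int (nat K))" using True assms(2,3) by simp
  then have m: "v \<le> Q (int m)" "m \<le> nat K"
    unfolding m_def by (rule LeastI, rule Least_le)
  show ?thesis
  proof
    assume "first_reach Q K v \<le> j"
    then have "Q (int m) \<le> Q j"
      using True m assms(2,3) by (intro mono_onD[OF mono]) (auto simp: first_reach_def m_def)
    then show "v \<le> Q j" using m by simp
  next
    assume "v \<le> Q j"
    then have "m \<le> nat j" unfolding m_def using \<open>0 \<le> j\<close> by (intro Least_le) simp
    then show "first_reach Q K v \<le> j" using True \<open>0 \<le> j\<close> by (simp add: first_reach_def m_def)
  qed
next
  case False
  have "Q j \<le> Q K" using assms(2,3) by (intro mono_onD[OF mono]) auto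
  then show ?thesis using False assms(3) by (simp add: first_reach_def)
qed

lemma first_reach_bounds:
  fixes Q :: "int \<Rightarrow> int"
  assumes mono: "mono_on {0..K} Q" and "0 \<le> K" and "Q 0 = 0" and "1 \<le> v"
  shows "1 \<le> first_reach Q K v \<and> first_reach Q K v \<le> K + 1"
proof
  show "1 \<le> first_reach Q K v"
    using first_reach_le_iff[OF mono order.refl \<open>0 \<le> K\<close>, of v] assms(3,4) by simp
  show "first_reach Q K v \<le> K + 1"
  proof (cases "v \<le> Q K")
    case True
    then show ?thesis using first_reach_le_iff[OF mono \<open>0 \<le> K\<close> order.refl, of v] by simp
  next
    case False
    then show ?thesis by (simp add: first_reach_def)
  qed
qed

lemma first_reach_mono:
  fixes Q :: "int \<Rightarrow> int"
  assumes mono: "mono_on {0..K} Q" and "0 \<le> K" and "Q 0 = 0" and "1 \<le> v" and "v \<le> w"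
  shows "first_reach Q K v \<le> first_reach Q K w"
proof -
  have v: "1 \<le> first_reach Q K v \<and> first_reach Q K v \<le> K + 1"
    and w: "1 \<le> first_reach Q K w \<and> first_reach Q K w \<le> K + 1"
    using first_reach_bounds[OF mono \<open>0 \<le> K\<close> \<open>Q 0 = 0\<close>] assms(4,5) by auto
  show ?thesis
  proof (cases "first_reach Q K w \<le> K")
    case True
    then have "w \<le> Q (first_reach Q K w)"
      using first_reach_le_iff[OF mono, of "first_reach Q K w" w] w by simp
    then show ?thesis
      using first_reach_le_iff[OF mono, of "first_reach Q K w" v] True w \<open>v \<le> w\<close> by simp
  next
    case False
    then show ?thesis using v w by simp
  qed
qed

lemma monotone_step_function_jump_count:
  fixes Q :: "int \<Rightarrow> int" and K :: int and V :: nat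
  assumes mono: "mono_on {0..K} Q" and "0 \<le> K" and Q0: "Q 0 = 0" and QK: "Q K \<le> int V"
  obtains ts where "length ts = V" "sorted ts" "set ts \<subseteq> {1..K+1}"
    "\<And>i j. 0 \<le> i \<Longrightarrow> i \<le> j \<Longrightarrow> j \<le> K \<Longrightarrow> Q j - Q i = jump_count ts i j"
proof
  let ?\<tau> = "first_reach Q K"
  define ts where "ts = map ?\<tau> [1..int V]"
  show "length ts = V" by (simp add: ts_def)
  show "sorted ts" unfolding ts_def sorted_map
    using first_reach_mono[OF mono \<open>0 \<le> K\<close> Q0]
    by (intro sorted_wrt_mono_rel[OF _ sorted_upto]) auto
  show "set ts \<subseteq> {1..K+1}"
    using first_reach_bounds[OF mono \<open>0 \<le> K\<close> Q0] by (auto simp: ts_def)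
  fix i j assume ij: "0 \<le> i" "i \<le> j" "j \<le> K"
  have Q_bounds: "0 \<le> Q i" "Q i \<le> Q j" "Q j \<le> int V"
    using mono_onD[OF mono, of 0 i] mono_onD[OF mono, of i j] mono_onD[OF mono, of j K] ij Q0 QK
    by auto
  have "?\<tau> v \<le> i \<longleftrightarrow> v \<le> Q i" "?\<tau> v \<le> j \<longleftrightarrow> v \<le> Q j" for v
    using ij by (intro first_reach_le_iff[OF mono]; linarith)+
  then have jump_iff: "i < ?\<tau> v \<and> ?\<tau> v \<le> j \<longleftrightarrow> Q i < v \<and> v \<le> Q j" for v
    by (meson not_le)
  have jumps: "{v. i < ?\<tau> v \<and> ?\<tau> v \<le> j} \<inter> {1..int V} = {Q i<..Q j}"
  proof (intro set_eqI)
    show "v \<in> {v. i < ?\<tau> v \<and> ?\<tau> v \<le> j} \<inter> {1..int V} \<longleftrightarrow> v \<in> {Q i<..Q j}" for v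
      using jump_iff[of v] Q_bounds by auto
  qed
  have "jump_count ts i j = int (length (filter (\<lambda>v. i < ?\<tau> v \<and> ?\<tau> v \<le> j) [1..int V]))"
    by (simp add: jump_count_def ts_def filter_map comp_def)
  also have "\<dots> = int (card {Q i<..Q j})"
    by (simp add: distinct_length_filter jumps)
  finally show "Q j - Q i = jump_count ts i j" using Q_bounds by simp
qed

text \<open>Each instance of \<open>w\<close> is a window, placed at a bounded offset from \<open>0\<close>, \<open>k\<close> or a jump
  position, whose constraint is used in the linear-arithmetic refutation of the case.\<close>

lemma five_jumps_impossible:
  fixes k l t1 t2 t3 t4 t5 :: int
  assumes l: "l \<in> {1, 2, 3}" and "l \<le> k"
    and sorted: "sorted [t1, t2, t3, t4, t5]" and range: "set [t1, t2, t3, t4, t5] \<subseteq> {1..2*k+1}"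
    and total: "jump_count [t1, t2, t3, t4, t5] 0 (2*k) < 2*l"
    and W: "\<And>i j. 0 \<le> i \<Longrightarrow> i < j \<Longrightarrow> j \<le> 2*k \<Longrightarrow>
       jump_count [t1, t2, t3, t4, t5] i j \<noteq> 2*k - 2*(j - i) \<and>
       jump_count [t1, t2, t3, t4, t5] i j \<noteq> 2*k + 2*l - 2*(j - i)"
  shows False
proof -
  have t: "1 \<le> t1" "t1 \<le> t2" "t2 \<le> t3" "t3 \<le> t4" "t4 \<le> t5" "t5 \<le> 2*k+1"
    using sorted range by auto
  have w: "0 \<le> i \<longrightarrow> 0 < L \<longrightarrow> i + L \<le> 2*k \<longrightarrow>
      jump_count [t1, t2, t3, t4, t5] i (i + L) \<noteq> 2*k - 2*L \<and>
      jump_count [t1, t2, t3, t4, t5] i (i + L) \<noteq> 2*k + 2*l - 2*L" for i L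
    using W[of i "i + L"] by simp
  note count = jump_count_Cons jump_count_Nil add_0_right
  consider "l = 1" | "l = 2" | "l = 3" using l by blast
  then show False
  proof cases
    case 1
    then show False
      using w[of 0 k] w[of k k] total \<open>l \<le> k\<close> unfolding count by (smt (verit))
  next
    case 2
    then show False
      using w[of "t5-k" "k-1"] w[of "t3-k+1" "k-1"] w[of "t2-1" "k-1"] w[of "t3-k" "k-1"]
        w[of t1 k] w[of t2 k] w[of "t5-k-1" k] w[of "t1-k-1" k]
        w[of "t2-1" "k+1"] w[of "t5-k-2" "k+1"] w[of "t2-k-1" "k+1"] w[of 0 "k+2"]
        w[of t1 "k+2"] w[of t2 "k+2"] w[of t3 "k+2"]
        total t \<open>l \<le> k\<close> unfolding count by (smt (verit))
  next
    case 3
    then show False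
      using w[of "k+2" "k-2"] w[of "t4-k+2" "k-2"] w[of "t2-1" "k-2"] w[of "t1-1" "k-2"]
        w[of "t5-k+1" "k-2"] w[of 0 "k-1"] w[of t1 "k-1"] w[of t2 "k-1"] w[of t3 "k-1"]
        w[of "k+1" "k-1"] w[of "t4-k+1" "k-1"] w[of "t3-k+1" "k-1"] w[of "t2-k+1" "k-1"]
        w[of k k] w[of 0 k] w[of t1 k] w[of t3 k] w[of "t5-k-1" k]
        w[of 0 "k+1"] w[of t1 "k+1"] w[of "t2-1" "k+1"] w[of "t5-k-1" "k+1"]
        w[of "t3-k-1" "k+1"] w[of "t4-k-1" "k+1"] w[of "t5-k-2" "k+1"]
        w[of 0 "k+2"] w[of t1 "k+2"] w[of "k-2" "k+2"] w[of "t5-1" "k+2"]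
        w[of "t4-k-2" "k+2"] w[of "t3-k-2" "k+2"] w[of "t2-k-2" "k+2"] w[of "t5-k-3" "k+2"]
        w[of "t3-k-3" "k+2"]
        total t \<open>l \<le> k\<close> unfolding count by (smt (verit))
  qed
qed

lemma no_admissible_excess_profile:
  fixes Q :: "int \<Rightarrow> int" and k l :: int
  assumes l: "l \<in> {1, 2, 3}" and "l \<le> k"
    and mono: "mono_on {0..2*k} Q" and "Q 0 = 0" and "Q (2*k) < 2*l"
    and forbidden: "\<And>i j. 0 \<le> i \<Longrightarrow> i < j \<Longrightarrow> j \<le> 2*k \<Longrightarrow>
       Q j - Q i \<noteq> 2*k - 2*(j - i) \<and> Q j - Q i \<noteq> 2*k + 2*l - 2*(j - i)"
  shows False
proof -
  have "0 \<le> 2*k" using \<open>l \<le> k\<close> l by auto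
  moreover have "Q (2*k) \<le> int 5" using \<open>Q (2*k) < 2*l\<close> l by auto
  ultimately obtain ts where ts: "length ts = 5" "sorted ts" "set ts \<subseteq> {1..2*k+1}"
    and count: "\<And>i j. 0 \<le> i \<Longrightarrow> i \<le> j \<Longrightarrow> j \<le> 2*k \<Longrightarrow> Q j - Q i = jump_count ts i j"
    using monotone_step_function_jump_count[OF mono _ \<open>Q 0 = 0\<close>] by blast
  then obtain t1 t2 t3 t4 t5 where ts_eq: "ts = [t1, t2, t3, t4, t5]"
    by (auto simp: length_Suc_conv numeral_eq_Suc)
  show False
  proof (rule five_jumps_impossible[OF l \<open>l \<le> k\<close>])
    show "sorted [t1, t2, t3, t4, t5]" "set [t1, t2, t3, t4, t5] \<subseteq> {1..2*k+1}"
      using ts unfolding ts_eq by auto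
    show "jump_count [t1, t2, t3, t4, t5] 0 (2*k) < 2*l"
      using count[of 0 "2*k"] \<open>Q 0 = 0\<close> \<open>Q (2*k) < 2*l\<close> \<open>l \<le> k\<close> l unfolding ts_eq by auto
    show "jump_count [t1, t2, t3, t4, t5] i j \<noteq> 2*k - 2*(j - i) \<and>
        jump_count [t1, t2, t3, t4, t5] i j \<noteq> 2*k + 2*l - 2*(j - i)"
      if "0 \<le> i" "i < j" "j \<le> 2*k" for i j
      using forbidden[OF that] count[of i j] that unfolding ts_eq by auto
  qed
qed

lemma card_window_le:
  fixes k l a :: int and A :: "int set"
  assumes indep: "dist_indep {1, 2*k, 2*k + 2*l} A" and l: "l \<in> {1, 2, 3}" and "l \<le> k"
  shows "int (card (A \<inter> {a..<a + (4*k + 2*l)})) \<le> 2*k"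
proof (rule ccontr)
  define K where "K = nat (2*k)"
  have K: "int K = 2*k" using l \<open>l \<le> k\<close> by (auto simp: K_def)
  assume "\<not> int (card (A \<inter> {a..<a + (4*k + 2*l)})) \<le> 2*k"
  then have "K < card (A \<inter> {a..<a + (4*k + 2*l)})" using K by linarith
  then obtain p where p_less: "\<And>i j. i < j \<Longrightarrow> j \<le> K \<Longrightarrow> p i < p j"
    and p_mem: "\<And>i. i \<le> K \<Longrightarrow> p i \<in> A \<inter> {a..<a + (4*k + 2*l)}"
    using obtain_increasing_elements[of "A \<inter> {a..<a + (4*k + 2*l)}" K] by blast
  have p_diff: "p j - p i \<notin> {1, 2*k, 2*k + 2*l}" if "i < j" "j \<le> K" for i j
    using indep p_mem[of i] p_mem[of j] p_less[OF that] that unfolding dist_indep_def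
    by (metis abs_of_pos diff_gt_0_iff_gt IntD1 less_imp_le order.trans)
  have spread: "p i + 2 * int (j - i) \<le> p j" if "i \<le> j" "j \<le> K" for i j
  proof (rule spread_ge_of_increments_ge[OF _ that])
    show "p i + 2 \<le> p (Suc i)" if "i < K" for i
      using p_less[of i "Suc i"] p_diff[of i "Suc i"] that by fastforce
  qed
  define Q where "Q i = p (nat i) - p 0 - 2*i" for i
  show False
  proof (rule no_admissible_excess_profile[OF l \<open>l \<le> k\<close>])
    show "mono_on {0..2*k} Q"
    proof (intro mono_onI)
      fix r s assume rs: "r \<in> {0..2*k}" "s \<in> {0..2*k}" "r \<le> s"
      then have "p (nat r) + 2 * int (nat s - nat r) \<le> p (nat s)" using K by (intro spread) auto
      then show "Q r \<le> Q s" using rs by (simp add: Q_def nat_diff_distrib)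
    qed
    show "Q 0 = 0" by (simp add: Q_def)
    show "Q (2*k) < 2*l"
      using p_mem[of 0] p_mem[of K] K by (simp add: Q_def K_def)
    show "Q j - Q i \<noteq> 2*k - 2*(j - i) \<and> Q j - Q i \<noteq> 2*k + 2*l - 2*(j - i)"
      if "0 \<le> i" "i < j" "j \<le> 2*k" for i j
      using p_diff[of "nat i" "nat j"] that K by (auto simp: Q_def)
  qed
qed

theorem theorem31:
  fixes l k :: int
  assumes "1 \<le> l" and "l \<le> 3" and "l \<le> k"
  shows "indep_ratio {1, 2 * k, 2 * k + 2 * l} = ereal (real_of_int (2 * k) / real_of_int (4 * k + 2 * l))"
  unfolding indep_ratio_def
proof (rule antisym)
  have l: "l \<in> {1, 2, 3}" using assms(1,2) by auto
  show "(SUP A \<in> {A. dist_indep {1, 2 * k, 2 * k + 2 * l} A}. upper_density A)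
      \<le> ereal (real_of_int (2 * k) / real_of_int (4 * k + 2 * l))"
  proof (rule SUP_least)
    fix A assume "A \<in> {A. dist_indep {1, 2 * k, 2 * k + 2 * l} A}"
    then show "upper_density A \<le> ereal (real_of_int (2 * k) / real_of_int (4 * k + 2 * l))"
      using card_window_le[OF _ l \<open>l \<le> k\<close>] assms by (intro upper_density_le_of_windows) auto
  qed
  define P where "P = {x. x mod (4 * k + 2 * l) \<in> extremal_residues k}"
  have "extremal_residues k \<subseteq> {0..<4 * k + 2 * l}"
    using assms by (auto simp: extremal_residues_def)
  then have "ereal (real_of_int (2 * k) / real_of_int (4 * k + 2 * l)) \<le> upper_density P"
    using card_periodic_Int_window card_extremal_residues assms unfolding P_def
    by (intro upper_density_ge_of_windows) auto
  moreover have "P \<in> {A. dist_indep {1, 2 * k, 2 * k + 2 * l} A}"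
    using dist_indep_extremal[OF assms(1,3)] by (simp add: P_def)
  ultimately show "ereal (real_of_int (2 * k) / real_of_int (4 * k + 2 * l))
      \<le> (SUP A \<in> {A. dist_indep {1, 2 * k, 2 * k + 2 * l} A}. upper_density A)"
    by (intro SUP_upper2)
qed

end
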